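(* Let $G$ be a $k$-DCFG in Chomsky normal form, let $T$ be a derivation tree of $G$, and let $(v,v')$ be a pump in $T$. Let $T'$ be the tree obtained from $T$ by collapsing this pump, i.e., replacing the subtree rooted at $v$ by the subtree rooted at $v'$ (so the nodes of $T'$ are nodes of $T$). If two nodes $v_1,v_2$ form a pump in $T'$, then $v_1,v_2$ also form a pump in $T$.
   Context: Let $\Sigma$ be a finite alphabet and $1\notin\Sigma$ a separator; $\Sigma_1=\Sigma\cup\{1\}$. A $k$-DCFG $G=\langle N,\Sigma,P,S\rangle$ has a finite set $N$ of nonterminals, each with a rank in $\{0,\dots,k\}$, start symbol $S$ of rank $0$, and rules; it is in Chomsky normal form if every rule has the form $A\to B\cdot C$ or $A\to B\odot_j C$ with $j\le k$, $B,C\in N\setminus\{S\}$ (subject to the rank constraints $\mathrm{rk}(A)=\mathrm{rk}(B)+\mathrm{rk}(C)$ for $\cdot$, $\mathrm{rk}(A)=\mathrm{rk}(B)+\mathrm{rk}(C)-1$ and $\mathrm{rk}(B)\ge j$ for $\odot_j$, all ranks $\le k$), $A\to a$ with $a\in\Sigma_1$ (rank of $a$ is $1$ if $a=1$, else $0$), or $S\to\epsilon$. A derivation tree is a finite rooted ordered tree with nodes labeled by nonterminals in which each internal node labeled $A$ has exactly two children labeled $B,C$ with $A\to B\cdot C$ or $A\to B\odot_j C$ a rule of $G$, and each leaf labeled $A$ corresponds to a rule $A\to a$ or $S\to\epsilon$. The rank of a node is the rank of its label. A node $v'$ is a direct descendant of a node $v$ if $v'$ is a proper descendant of $v$ and all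 nodes on the path from $v$ to $v'$ (inclusive) have the same rank. A pump is a pair $(v,v')$ of internal nodes with the same nonterminal label such that $v'$ is a direct descendant of $v$. *)

theory Defs
  imports Main "HOL-Library.Sublist"
begin

text \<open>Rules of a k-DCFG in Chomsky normal form.  Terminals are \<open>'a option\<close>,
  where \<open>None\<close> is the separator 1 and \<open>Some a\<close> is a letter a of Sigma.\<close>
datatype ('n, 'a) rule =
    Concat 'n 'n 'n
  | Wrap 'n nat 'n 'n        (* A -> B (.)_j C *)
  | Term 'n "'a option"
  | Eps 'n

definition cnf_dcfg ::
  "nat \<Rightarrow> 'n set \<Rightarrow> ('n \<Rightarrow> nat) \<Rightarrow> 'n \<Rightarrow> ('n, 'a) rule set \<Rightarrow> bool" where
  "cnf_dcfg k N rk S P \<longleftrightarrow>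
     finite N \<and> finite P \<and> S \<in> N \<and> rk S = 0 \<and> (\<forall>A\<in>N. rk A \<le> k) \<and>
     (\<forall>r\<in>P. case r of
        Concat A B C \<Rightarrow> A \<in> N \<and> B \<in> N - {S} \<and> C \<in> N - {S} \<and> rk A = rk B + rk C
      | Wrap A j B C \<Rightarrow> A \<in> N \<and> B \<in> N - {S} \<and> C \<in> N - {S} \<and> j \<le> k \<and>
                        rk A + 1 = rk B + rk C \<and> j \<le> rk B
      | Term A a \<Rightarrow> A \<in> N \<and> rk A = (if a = None then 1 else 0)
      | Eps A \<Rightarrow> A = S)"

datatype 'n tree = Leaf 'n | Node 'n "'n tree" "'n tree"

fun root :: "'n tree \<Rightarrow> 'n" where
  "root (Leaf A) = A"
| "root (Node A l r) = A"

fun deriv_tree :: "('n, 'a) rule set \<Rightarrow> 'n \<Rightarrow> 'n tree \<Rightarrow> bool" where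
  "deriv_tree P S (Leaf A) \<longleftrightarrow> (\<exists>a. Term A a \<in> P) \<or> (A = S \<and> Eps S \<in> P)"
| "deriv_tree P S (Node A l r) \<longleftrightarrow>
     (Concat A (root l) (root r) \<in> P \<or> (\<exists>j. Wrap A j (root l) (root r) \<in> P)) \<and>
     deriv_tree P S l \<and> deriv_tree P S r"

text \<open>Nodes are addressed by positions: lists of directions (False = left child,
  True = right child) from the root.\<close>
fun subt :: "'n tree \<Rightarrow> bool list \<Rightarrow> 'n tree option" where
  "subt t [] = Some t"
| "subt (Leaf A) (d # p) = None"
| "subt (Node A l r) (d # p) = subt (if d then r else l) p"

definition is_node :: "'n tree \<Rightarrow> bool list \<Rightarrow> bool" where
  "is_node t p \<longleftrightarrow> subt t p \<noteq> None"

definition is_internal :: "'n tree \<Rightarrow> bool list \<Rightarrow> bool" where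
  "is_internal t p \<longleftrightarrow> (\<exists>A l r. subt t p = Some (Node A l r))"

definition label :: "'n tree \<Rightarrow> bool list \<Rightarrow> 'n" where
  "label t p = root (the (subt t p))"

definition direct_desc :: "('n \<Rightarrow> nat) \<Rightarrow> 'n tree \<Rightarrow> bool list \<Rightarrow> bool list \<Rightarrow> bool" where
  "direct_desc rk t v v' \<longleftrightarrow> is_node t v' \<and> strict_prefix v v' \<and>
     (\<forall>u. prefix v u \<and> prefix u v' \<longrightarrow> rk (label t u) = rk (label t v))"

definition pump :: "('n \<Rightarrow> nat) \<Rightarrow> 'n tree \<Rightarrow> bool list \<Rightarrow> bool list \<Rightarrow> bool" where
  "pump rk t v v' \<longleftrightarrow> is_internal t v \<and> is_internal t v' \<and>
     label t v = label t v' \<and> direct_desc rk t v v'"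

fun replace :: "'n tree \<Rightarrow> bool list \<Rightarrow> 'n tree \<Rightarrow> 'n tree" where
  "replace t [] s = s"
| "replace (Leaf A) (d # p) s = Leaf A"
| "replace (Node A l r) (d # p) s =
     (if d then Node A l (replace r p s) else Node A (replace l p s) r)"

definition collapse :: "'n tree \<Rightarrow> bool list \<Rightarrow> bool list \<Rightarrow> 'n tree" where
  "collapse t v v' = replace t v (the (subt t v'))"

text \<open>The node of T corresponding to position p of the collapsed tree.\<close>
definition orig_pos :: "bool list \<Rightarrow> bool list \<Rightarrow> bool list \<Rightarrow> bool list" where
  "orig_pos v v' p = (if prefix v p then v' @ drop (length v) p else p)"

end

theory Submission
  imports Defs
begin

text \<open>Collapsing the pump (v, v') puts the subtree of T at v' at position v and leaves the
  nodes not below v in place, so orig_pos identifies the nodes of the collapsed tree with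
  nodes of T, preserving labels, internality and the strict prefix order.  A path of the
  collapsed tree from v1 to v2 maps to a path of T, except that when it passes through v the
  segment from v to v' that was cut out is re-inserted; on that segment the rank is constant
  because (v, v') is itself a pump, and it equals the rank at v' = orig_pos v v' v.\<close>

lemma subt_append: "subt t (p @ q) = Option.bind (subt t p) (\<lambda>t'. subt t' q)"
proof (induction p arbitrary: t)
  case (Cons d p)
  then show ?case by (cases t) auto
qed simp

lemma is_internal_imp_is_node: "is_internal t p \<Longrightarrow> is_node t p"
  by (auto simp: is_internal_def is_node_def)

lemma is_node_prefix: "is_node t q \<Longrightarrow> prefix p q \<Longrightarrow> is_node t p"
  by (cases "subt t p") (auto simp: is_node_def prefix_def subt_append)

lemma subt_replace_append: "is_node t v \<Longrightarrow> subt (replace t v s) (v @ x) = subt s x"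
  by (induction t v s rule: replace.induct) (auto simp: is_node_def)

lemma subt_replace_parallel:
  "\<not> prefix v p \<Longrightarrow> \<not> prefix p v \<Longrightarrow> subt (replace t v s) p = subt t p"
proof (induction t v s arbitrary: p rule: replace.induct)
  case (3 A l r d v s)
  then show ?case by (cases p) auto
qed auto

lemma subt_replace_strict_prefix:
  assumes "is_node t v" "strict_prefix p v"
  shows "\<exists>A l r l' r'. subt t p = Some (Node A l r) \<and> subt (replace t v s) p = Some (Node A l' r')"
  using assms
proof (induction t v s arbitrary: p rule: replace.induct)
  case (3 A l r d v s)
  show ?case
  proof (cases p)
    case (Cons e p')
    with "3.prems" have "e = d" "strict_prefix p' v" by auto
    with 3 Cons show ?thesis by (auto simp: is_node_def)
  qed auto
qed (auto simp: is_node_def)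

lemma subt_collapse:
  assumes "is_node T v" "is_node T v'" "\<not> strict_prefix p v"
  shows "subt (collapse T v v') p = subt T (orig_pos v v' p)"
proof (cases "prefix v p")
  case True
  then obtain x where "p = v @ x" by (auto simp: prefix_def)
  moreover obtain s where "subt T v' = Some s" using assms(2) by (auto simp: is_node_def)
  ultimately show ?thesis
    using subt_replace_append[OF assms(1)]
    by (simp add: collapse_def orig_pos_def subt_append)
next
  case False
  with assms(3) have "\<not> prefix p v" by (auto simp: strict_prefix_def)
  with False show ?thesis by (simp add: collapse_def orig_pos_def subt_replace_parallel)
qed

lemma collapse_node_orig_pos:
  assumes "is_node T v" "is_node T v'" "is_node (collapse T v v') p"
  shows "is_node T (orig_pos v v' p)"
    and "label (collapse T v v') p = label T (orig_pos v v' p)"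
    and "is_internal (collapse T v v') p \<longleftrightarrow> is_internal T (orig_pos v v' p)"
proof -
  have "is_node T (orig_pos v v' p) \<and> label (collapse T v v') p = label T (orig_pos v v' p)
    \<and> (is_internal (collapse T v v') p \<longleftrightarrow> is_internal T (orig_pos v v' p))"
  proof (cases "strict_prefix p v")
    case True
    then have "orig_pos v v' p = p"
      by (auto simp: orig_pos_def strict_prefix_def dest: prefix_order.antisym)
    with True subt_replace_strict_prefix[OF assms(1) True, of "the (subt T v')"] show ?thesis
      by (auto simp: is_node_def label_def is_internal_def collapse_def)
  next
    case False
    with assms(3) show ?thesis
      by (simp add: subt_collapse[OF assms(1,2) False] is_node_def label_def is_internal_def)
  qed
  then show "is_node T (orig_pos v v' p)"
    and "label (collapse T v v') p = label T (orig_pos v v' p)"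
    and "is_internal (collapse T v v') p \<longleftrightarrow> is_internal T (orig_pos v v' p)"
    by simp_all
qed

lemma orig_pos_strict_mono:
  assumes "prefix v v'" "strict_prefix p q"
  shows "strict_prefix (orig_pos v v' p) (orig_pos v v' q)"
proof (cases "prefix v p")
  case True
  with assms(2) show ?thesis
    by (auto simp: orig_pos_def strict_prefix_def prefix_def)
next
  case False
  show ?thesis
  proof (cases "prefix v q")
    case True
    have "strict_prefix p v"
      using False True assms(2) prefix_same_cases[of p q v]
      by (auto simp: strict_prefix_def)
    then show ?thesis
      using True False assms(1) by (auto simp: orig_pos_def prefix_def strict_prefix_def)
  qed (use False assms(2) in \<open>simp add: orig_pos_def\<close>)
qed

lemma prefix_orig_pos_path_cases:
  assumes "prefix v v'" "prefix p q"
    and "prefix (orig_pos v v' p) u" "prefix u (orig_pos v v' q)"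
  obtains u' where "prefix p u'" "prefix u' q" "u = orig_pos v v' u'"
  | "prefix p v" "prefix v q" "prefix v u" "prefix u v'"
proof -
  consider "prefix v' u" | "prefix v u" "\<not> prefix v' u" | "\<not> prefix v u"
    using assms(1) by (metis prefix_order.trans)
  then show thesis
  proof cases
    case 1
    then obtain y where y: "u = v' @ y" by (auto simp: prefix_def)
    have "prefix v q"
      using assms(1,4) 1 by (metis orig_pos_def prefix_order.trans)
    then obtain z where z: "q = v @ z" by (auto simp: prefix_def)
    have "prefix y z" using assms(4) y z by (simp add: orig_pos_def)
    moreover have "prefix p (v @ y)"
    proof (cases "prefix v p")
      case False
      then have "prefix p v"
        using assms(2) \<open>prefix v q\<close> prefix_same_cases by blast
      then show ?thesis by (rule prefix_prefix)
    qed (use assms(3) y in \<open>auto simp: orig_pos_def prefix_def\<close>)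
    ultimately show thesis
      using that(1)[of "v @ y"] y z by (simp add: orig_pos_def)
  next
    case 2
    have "prefix v q"
      using assms(4) 2(1) by (metis orig_pos_def prefix_order.trans)
    then have "prefix v' (orig_pos v v' q)" by (auto simp: orig_pos_def prefix_def)
    then have "prefix u v'"
      using assms(4) 2(2) prefix_same_cases by blast
    have "\<not> prefix v p"
      using assms(3) 2(2) by (auto simp: orig_pos_def prefix_def)
    then have "prefix p v"
      using assms(3) 2(1) prefix_same_cases[of p u v] by (simp add: orig_pos_def)
    with \<open>prefix v q\<close> \<open>prefix u v'\<close> 2(1) show thesis by (intro that(2))
  next
    case 3
    have "\<not> prefix v p"
      using assms(1,3) 3 by (auto simp: orig_pos_def prefix_def)
    then have "prefix p u" using assms(3) by (simp add: orig_pos_def)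
    have "prefix u q"
    proof (cases "prefix v q")
      case True
      then have "prefix v' (orig_pos v v' q)" by (auto simp: orig_pos_def prefix_def)
      then have "prefix u v'"
        using assms(1,4) 3 prefix_same_cases prefix_order.trans by metis
      then have "prefix u v"
        using assms(1) 3 prefix_same_cases by blast
      then show ?thesis using True by (rule prefix_order.trans)
    qed (use assms(4) in \<open>simp add: orig_pos_def\<close>)
    with \<open>prefix p u\<close> 3 show thesis by (intro that(1)[of u]) (simp_all add: orig_pos_def)
  qed
qed

lemma direct_desc_collapse_orig_pos:
  assumes "is_node T v" and "direct_desc rk T v v'"
    and "direct_desc rk (collapse T v v') v1 v2"
  shows "direct_desc rk T (orig_pos v v' v1) (orig_pos v v' v2)"
proof -
  let ?T' = "collapse T v v'" and ?o = "orig_pos v v'"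
  have "is_node T v'" "strict_prefix v v'"
    and rk_vv': "\<And>u. prefix v u \<Longrightarrow> prefix u v' \<Longrightarrow> rk (label T u) = rk (label T v)"
    using assms(2) unfolding direct_desc_def by blast+
  then have "prefix v v'" by simp
  have "is_node ?T' v2" "strict_prefix v1 v2"
    and rk12: "\<And>u. prefix v1 u \<Longrightarrow> prefix u v2 \<Longrightarrow> rk (label ?T' u) = rk (label ?T' v1)"
    using assms(3) unfolding direct_desc_def by blast+
  then have "prefix v1 v2" by simp
  note corr = collapse_node_orig_pos[OF assms(1) \<open>is_node T v'\<close>
      is_node_prefix[OF \<open>is_node ?T' v2\<close>]]
  have rk_path: "rk (label T u) = rk (label T (?o v1))"
    if "prefix (?o v1) u" "prefix u (?o v2)" for u
    using \<open>prefix v v'\<close> \<open>prefix v1 v2\<close> that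
  proof (cases rule: prefix_orig_pos_path_cases)
    case (1 u')
    have "rk (label T u) = rk (label ?T' u')" using corr(2)[OF \<open>prefix u' v2\<close>] 1(3) by simp
    also have "\<dots> = rk (label ?T' v1)" using rk12 1(1,2) .
    also have "\<dots> = rk (label T (?o v1))" using corr(2)[OF \<open>prefix v1 v2\<close>] by simp
    finally show ?thesis .
  next
    case 2
    have "rk (label T u) = rk (label T v)" using 2(3,4) by (rule rk_vv')
    also have "\<dots> = rk (label T v')" using rk_vv'[OF \<open>prefix v v'\<close> prefix_order.refl] ..
    also have "\<dots> = rk (label ?T' v)" using corr(2)[OF 2(2)] by (simp add: orig_pos_def)
    also have "\<dots> = rk (label ?T' v1)" using rk12 2(1,2) .
    also have "\<dots> = rk (label T (?o v1))" using corr(2)[OF \<open>prefix v1 v2\<close>] by simp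
    finally show ?thesis .
  qed
  moreover have "is_node T (?o v2)" using corr(1)[OF prefix_order.refl] .
  moreover have "strict_prefix (?o v1) (?o v2)"
    using \<open>prefix v v'\<close> \<open>strict_prefix v1 v2\<close> by (rule orig_pos_strict_mono)
  ultimately show ?thesis unfolding direct_desc_def by blast
qed

lemma pump_collapse_orig_pos:
  assumes "pump rk T v v'" and "pump rk (collapse T v v') v1 v2"
  shows "pump rk T (orig_pos v v' v1) (orig_pos v v' v2)"
proof -
  let ?T' = "collapse T v v'" and ?o = "orig_pos v v'"
  have "is_node T v" "is_node T v'"
    using assms(1) unfolding pump_def direct_desc_def by (blast intro: is_internal_imp_is_node)+
  have "is_node ?T' v2" "prefix v1 v2"
    using assms(2) unfolding pump_def direct_desc_def by (blast intro: prefix_order.less_imp_le)+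
  note corr = collapse_node_orig_pos[OF \<open>is_node T v\<close> \<open>is_node T v'\<close>
      is_node_prefix[OF \<open>is_node ?T' v2\<close>]]
  have "direct_desc rk T (?o v1) (?o v2)"
    using \<open>is_node T v\<close> assms by (intro direct_desc_collapse_orig_pos) (simp_all add: pump_def)
  moreover have "is_internal T (?o v1)" "is_internal T (?o v2)"
    using assms(2) corr(3)[OF \<open>prefix v1 v2\<close>] corr(3)[OF prefix_order.refl]
    by (simp_all add: pump_def)
  moreover have "label T (?o v1) = label T (?o v2)"
    using assms(2) corr(2)[OF \<open>prefix v1 v2\<close>] corr(2)[OF prefix_order.refl]
    by (simp add: pump_def)
  ultimately show ?thesis by (simp add: pump_def)
qed

theorem lemma7:
  fixes k :: nat and N :: "'n set" and rk :: "'n \<Rightarrow> nat" and S :: 'n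
    and P :: "('n, 'a) rule set" and T :: "'n tree"
    and v v' v1 v2 :: "bool list"
  assumes "cnf_dcfg k N rk S P"
    and "deriv_tree P S T"
    and "pump rk T v v'"
    and "pump rk (collapse T v v') v1 v2"
  shows "pump rk T (orig_pos v v' v1) (orig_pos v v' v2)"
  using assms(3,4) by (rule pump_collapse_orig_pos)

end
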